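(* Let $\Omega$ be a nonempty set. A binary relation $\succeq$ on $\mathfrak F(\Omega)$ is a regular stochastic order if and only if there exists a coherent, cash subadditive loss measure $\rho$ with $\rho(-1)>0$ such that for all $f,g\in\mathfrak F(\Omega)$: $f\succeq g$ if and only if $\rho(f-g)\le0$.
   Context: $\mathfrak F(\Omega)$ is the set of real-valued functions on $\Omega$; inequalities, $\wedge$ are pointwise, constants are constant functions. A regular stochastic order is a reflexive, transitive binary relation $\succeq$ on $\mathfrak F(\Omega)$ such that: (TRIV) $0\not\succeq 1$; (CONE) $f_i\succeq g_i$ and $a_i\ge0$ for $i=1,2$ imply $a_1f_1+a_2f_2\succeq a_1g_1+a_2g_2$; (CERT) $f\ge0$ implies $f\succeq0$; (APPR) if $f+2^{-n}\succeq0$ for all $n\in\mathbb N$ then $f\succeq0$; (REST) $f\succeq0$ and $A\subset\Omega$ imply $f1_A\succeq0$. A coherent, cash subadditive loss measure is a map $\rho:\mathfrak F(\Omega)\to[-\infty,\infty]$ that is (a) positively homogeneous, (b) subadditive, (c) inversely monotone ($f\le g$ implies $\rho(f)\ge\rho(g)$), (d) cash subadditive ($\rho(f+\alpha)\ge\rho(f)-\alpha$ for real $\alpha\ge0$), and (e) satisfies $\rho(f)=\rho(f\wedge0)$ for all $f$. *)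

theory Defs
  imports "HOL-Library.Extended_Real"
begin

text \<open>Omega is the (nonempty) type 'a; F(Omega) is 'a \<Rightarrow> real.
  Constants are constant functions; wedge is pointwise min.\<close>

definition regular_stochastic_order :: "(('a \<Rightarrow> real) \<Rightarrow> ('a \<Rightarrow> real) \<Rightarrow> bool) \<Rightarrow> bool" where
  "regular_stochastic_order R \<longleftrightarrow>
     (\<forall>f. R f f) \<and>
     (\<forall>f g h. R f g \<longrightarrow> R g h \<longrightarrow> R f h) \<and>
     \<not> R (\<lambda>_. 0) (\<lambda>_. 1) \<and>
     (\<forall>f1 g1 f2 g2 (a1::real) (a2::real). R f1 g1 \<longrightarrow> R f2 g2 \<longrightarrow> a1 \<ge> 0 \<longrightarrow> a2 \<ge> 0 \<longrightarrow>
        R (\<lambda>x. a1 * f1 x + a2 * f2 x) (\<lambda>x. a1 * g1 x + a2 * g2 x)) \<and>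
     (\<forall>f. (\<forall>x. f x \<ge> 0) \<longrightarrow> R f (\<lambda>_. 0)) \<and>
     (\<forall>f. (\<forall>n::nat. R (\<lambda>x. f x + (1/2)^n) (\<lambda>_. 0)) \<longrightarrow> R f (\<lambda>_. 0)) \<and>
     (\<forall>f A. R f (\<lambda>_. 0) \<longrightarrow> R (\<lambda>x. if x \<in> A then f x else 0) (\<lambda>_. 0))"

definition coherent_cash_subadditive_loss_measure :: "(('a \<Rightarrow> real) \<Rightarrow> ereal) \<Rightarrow> bool" where
  "coherent_cash_subadditive_loss_measure \<rho> \<longleftrightarrow>
     (\<forall>f (a::real). a \<ge> 0 \<longrightarrow> \<rho> (\<lambda>x. a * f x) = ereal a * \<rho> f) \<and>
     (\<forall>f g. \<rho> (\<lambda>x. f x + g x) \<le> \<rho> f + \<rho> g) \<and>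
     (\<forall>f g. (\<forall>x. f x \<le> g x) \<longrightarrow> \<rho> f \<ge> \<rho> g) \<and>
     (\<forall>f (\<alpha>::real). \<alpha> \<ge> 0 \<longrightarrow> \<rho> (\<lambda>x. f x + \<alpha>) \<ge> \<rho> f - ereal \<alpha>) \<and>
     (\<forall>f. \<rho> f = \<rho> (\<lambda>x. min (f x) 0))"

end

theory Submission imports Defs begin

text \<open>A regular order is recovered from its capital requirement
  \<open>\<rho>(f) = inf {\<alpha> \<ge> 0. f + \<alpha> \<succeq> 0}\<close>: the cone axiom makes \<open>\<rho>\<close> coherent and \<open>f \<succeq> g\<close>
  depend only on \<open>f - g\<close>, (APPR) makes the infimum attained, so that \<open>f \<succeq> 0\<close> iff \<open>\<rho>(f) \<le> 0\<close>,
  and (REST) with \<open>A = {f < 0}\<close> makes acceptability, hence \<open>\<rho>\<close>, depend only on \<open>min f 0\<close>.\<close>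

definition induced_order :: "(('a \<Rightarrow> real) \<Rightarrow> ereal) \<Rightarrow> ('a \<Rightarrow> real) \<Rightarrow> ('a \<Rightarrow> real) \<Rightarrow> bool" where
  "induced_order \<rho> f g \<longleftrightarrow> \<rho> (\<lambda>x. f x - g x) \<le> 0"

lemma ereal_le_zero_if_le_powers_half:
  fixes x :: ereal
  assumes "\<And>n::nat. x \<le> ereal ((1/2)^n)"
  shows "x \<le> 0"
proof (rule ereal_le_epsilon2)
  fix e :: real assume "0 < e"
  then obtain n where "(1/2::real)^n < e" using real_arch_pow_inv[of e "1/2"] by auto
  then have "x \<le> ereal e" using assms[of n] by (meson dual_order.trans ereal_less_eq(3) less_le)
  then show "x \<le> 0 + ereal e" by simp
qed

lemma nonneg_ereal_eqI:
  fixes x y :: ereal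
  assumes "\<And>t. t \<ge> 0 \<Longrightarrow> x \<le> ereal t \<longleftrightarrow> y \<le> ereal t" and "x \<ge> 0" and "y \<ge> 0"
  shows "x = y"
  using assms by (cases x; cases y) (auto intro: antisym)

locale coherent_loss =
  fixes \<rho> :: "('a \<Rightarrow> real) \<Rightarrow> ereal"
  assumes coherent: "coherent_cash_subadditive_loss_measure \<rho>"
begin

lemma homogeneous: "a \<ge> 0 \<Longrightarrow> \<rho> (\<lambda>x. a * f x) = ereal a * \<rho> f"
  and subadditive: "\<rho> (\<lambda>x. f x + g x) \<le> \<rho> f + \<rho> g"
  and antimono: "(\<And>x. f x \<le> g x) \<Longrightarrow> \<rho> g \<le> \<rho> f"
  and cash_subadditive: "\<alpha> \<ge> 0 \<Longrightarrow> \<rho> f - ereal \<alpha> \<le> \<rho> (\<lambda>x. f x + \<alpha>)"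
  and min_zero: "\<rho> (\<lambda>x. min (f x) 0) = \<rho> f"
  using coherent unfolding coherent_cash_subadditive_loss_measure_def by metis+

lemma zero: "\<rho> (\<lambda>_. 0) = 0"
  using homogeneous[of 0 "\<lambda>_. 0"] by (simp add: zero_ereal_def[symmetric])

lemma induced_trans:
  assumes "induced_order \<rho> f g" and "induced_order \<rho> g h"
  shows "induced_order \<rho> f h"
proof -
  have "\<rho> (\<lambda>x. f x - h x) = \<rho> (\<lambda>x. (f x - g x) + (g x - h x))" by simp
  also have "\<dots> \<le> \<rho> (\<lambda>x. f x - g x) + \<rho> (\<lambda>x. g x - h x)" by (rule subadditive)
  also have "\<dots> \<le> 0" using assms by (simp add: induced_order_def add_nonpos_nonpos)
  finally show ?thesis by (simp add: induced_order_def)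
qed

lemma induced_cone:
  assumes "induced_order \<rho> f1 g1" "induced_order \<rho> f2 g2" and "a1 \<ge> 0" "a2 \<ge> 0"
  shows "induced_order \<rho> (\<lambda>x. a1 * f1 x + a2 * f2 x) (\<lambda>x. a1 * g1 x + a2 * g2 x)"
proof -
  have "\<rho> (\<lambda>x. (a1 * f1 x + a2 * f2 x) - (a1 * g1 x + a2 * g2 x))
      = \<rho> (\<lambda>x. a1 * (f1 x - g1 x) + a2 * (f2 x - g2 x))" by (simp add: algebra_simps)
  also have "\<dots> \<le> \<rho> (\<lambda>x. a1 * (f1 x - g1 x)) + \<rho> (\<lambda>x. a2 * (f2 x - g2 x))" by (rule subadditive)
  also have "\<dots> = ereal a1 * \<rho> (\<lambda>x. f1 x - g1 x) + ereal a2 * \<rho> (\<lambda>x. f2 x - g2 x)"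
    using assms(3,4) by (simp add: homogeneous)
  also have "\<dots> \<le> 0"
    using assms by (intro add_nonpos_nonpos) (simp_all add: induced_order_def ereal_mult_le_0_iff)
  finally show ?thesis by (simp add: induced_order_def)
qed

lemma induced_approx:
  assumes "\<And>n::nat. induced_order \<rho> (\<lambda>x. f x + (1/2)^n) (\<lambda>_. 0)"
  shows "induced_order \<rho> f (\<lambda>_. 0)"
proof -
  have "\<rho> f \<le> ereal ((1/2)^n)" for n :: nat
  proof -
    have "\<rho> f - ereal ((1/2)^n) \<le> \<rho> (\<lambda>x. f x + (1/2)^n)" by (rule cash_subadditive) simp
    also have "\<dots> \<le> 0" using assms[of n] by (simp add: induced_order_def)
    finally show ?thesis by (cases "\<rho> f") auto
  qed
  then show ?thesis by (simp add: induced_order_def ereal_le_zero_if_le_powers_half)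
qed

lemma induced_restrict:
  assumes "induced_order \<rho> f (\<lambda>_. 0)"
  shows "induced_order \<rho> (\<lambda>x. if x \<in> A then f x else 0) (\<lambda>_. 0)"
proof -
  have "\<rho> (\<lambda>x. min (if x \<in> A then f x else 0) 0) \<le> \<rho> (\<lambda>x. min (f x) 0)"
    by (rule antimono) auto
  then show ?thesis using assms by (simp add: induced_order_def min_zero)
qed

lemma regular_stochastic_order_induced_order:
  assumes "\<rho> (\<lambda>_. -1) > 0"
  shows "regular_stochastic_order (induced_order \<rho>)"
  unfolding regular_stochastic_order_def
proof (intro conjI allI impI)
  show "induced_order \<rho> f f" for f by (simp add: induced_order_def zero)
  show "\<not> induced_order \<rho> (\<lambda>_. 0) (\<lambda>_. 1)" using assms by (simp add: induced_order_def)
  show "induced_order \<rho> f (\<lambda>_. 0)" if "\<forall>x. f x \<ge> 0" for f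
    using antimono[of "\<lambda>_. 0" f] that zero by (simp add: induced_order_def)
  show "induced_order \<rho> f h" if "induced_order \<rho> f g" "induced_order \<rho> g h" for f g h
    using that by (rule induced_trans)
  show "induced_order \<rho> (\<lambda>x. a1 * f1 x + a2 * f2 x) (\<lambda>x. a1 * g1 x + a2 * g2 x)"
    if "induced_order \<rho> f1 g1" "induced_order \<rho> f2 g2" "a1 \<ge> 0" "a2 \<ge> 0"
    for f1 g1 f2 g2 and a1 a2 :: real
    using that by (rule induced_cone)
  show "induced_order \<rho> f (\<lambda>_. 0)"
    if "\<forall>n::nat. induced_order \<rho> (\<lambda>x. f x + (1/2)^n) (\<lambda>_. 0)" for f
    by (rule induced_approx) (simp add: that)
  show "induced_order \<rho> (\<lambda>x. if x \<in> A then f x else 0) (\<lambda>_. 0)"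
    if "induced_order \<rho> f (\<lambda>_. 0)" for f and A :: "'a set"
    using that by (rule induced_restrict)
qed

end

definition order_loss :: "(('a \<Rightarrow> real) \<Rightarrow> ('a \<Rightarrow> real) \<Rightarrow> bool) \<Rightarrow> ('a \<Rightarrow> real) \<Rightarrow> ereal" where
  "order_loss R f = Inf (ereal ` {\<alpha>. \<alpha> \<ge> 0 \<and> R (\<lambda>x. f x + \<alpha>) (\<lambda>_. 0)})"

locale regular_order =
  fixes R :: "('a \<Rightarrow> real) \<Rightarrow> ('a \<Rightarrow> real) \<Rightarrow> bool"
  assumes regular: "regular_stochastic_order R"
begin

abbreviation acceptable :: "('a \<Rightarrow> real) \<Rightarrow> bool" where
  "acceptable f \<equiv> R f (\<lambda>_. 0)"

lemma refl: "R f f"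
  and trans: "R f g \<Longrightarrow> R g h \<Longrightarrow> R f h"
  and nontrivial: "\<not> R (\<lambda>_. 0) (\<lambda>_. 1)"
  and cone: "R f1 g1 \<Longrightarrow> R f2 g2 \<Longrightarrow> a1 \<ge> 0 \<Longrightarrow> a2 \<ge> 0 \<Longrightarrow>
      R (\<lambda>x. a1 * f1 x + a2 * f2 x) (\<lambda>x. a1 * g1 x + a2 * g2 x)"
  and acceptable_nonneg: "(\<And>x. f x \<ge> 0) \<Longrightarrow> acceptable f"
  and acceptable_approx: "(\<And>n::nat. acceptable (\<lambda>x. f x + (1/2)^n)) \<Longrightarrow> acceptable f"
  and acceptable_restrict: "acceptable f \<Longrightarrow> acceptable (\<lambda>x. if x \<in> A then f x else 0)"
  using regular unfolding regular_stochastic_order_def by blast+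

lemma add: "R f1 g1 \<Longrightarrow> R f2 g2 \<Longrightarrow> R (\<lambda>x. f1 x + f2 x) (\<lambda>x. g1 x + g2 x)"
  using cone[of f1 g1 f2 g2 1 1] by simp

lemma acceptable_add: "acceptable f \<Longrightarrow> acceptable g \<Longrightarrow> acceptable (\<lambda>x. f x + g x)"
  using add[of f "\<lambda>_. 0" g "\<lambda>_. 0"] by simp

lemma acceptable_scale: "a \<ge> 0 \<Longrightarrow> acceptable f \<Longrightarrow> acceptable (\<lambda>x. a * f x)"
  using cone[of f "\<lambda>_. 0" "\<lambda>_. 0" "\<lambda>_. 0" a 0] refl by simp

lemma acceptable_scale_iff: "a > 0 \<Longrightarrow> acceptable (\<lambda>x. a * f x) \<longleftrightarrow> acceptable f"
  using acceptable_scale[of a f] acceptable_scale[of "1/a" "\<lambda>x. a * f x"] by auto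

lemma R_iff_acceptable_diff: "R f g \<longleftrightarrow> acceptable (\<lambda>x. f x - g x)"
  using add[OF _ refl, of f g "\<lambda>x. - g x"] add[OF _ refl, of "\<lambda>x. f x - g x" "\<lambda>_. 0" g] by auto

lemma acceptable_mono: "acceptable f \<Longrightarrow> (\<And>x. f x \<le> g x) \<Longrightarrow> acceptable g"
  using acceptable_add[of f "\<lambda>x. g x - f x"] acceptable_nonneg[of "\<lambda>x. g x - f x"] by simp

lemma acceptable_min_zero_iff: "acceptable (\<lambda>x. min (f x) 0) \<longleftrightarrow> acceptable f"
proof
  assume "acceptable f"
  have "(\<lambda>x. if x \<in> {x. f x < 0} then f x else 0) = (\<lambda>x. min (f x) 0)"
    by (auto simp: fun_eq_iff)
  with acceptable_restrict[OF \<open>acceptable f\<close>] show "acceptable (\<lambda>x. min (f x) 0)" by metis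
next
  assume "acceptable (\<lambda>x. min (f x) 0)"
  then show "acceptable f" by (rule acceptable_mono) simp
qed

lemma not_acceptable_minus_one: "\<not> acceptable (\<lambda>_. -1)"
  using nontrivial R_iff_acceptable_diff[of "\<lambda>_. 0" "\<lambda>_. 1"] by simp

lemma order_loss_nonneg: "order_loss R f \<ge> 0"
  unfolding order_loss_def by (rule Inf_greatest) auto

lemma order_loss_le_iff:
  assumes "t \<ge> 0"
  shows "order_loss R f \<le> ereal t \<longleftrightarrow> acceptable (\<lambda>x. f x + t)"
proof
  assume "acceptable (\<lambda>x. f x + t)"
  then show "order_loss R f \<le> ereal t"
    using assms unfolding order_loss_def by (intro Inf_lower) auto
next
  assume le: "order_loss R f \<le> ereal t"
  have "acceptable (\<lambda>x. (f x + t) + (1/2)^n)" for n :: nat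
  proof -
    have "order_loss R f < ereal (t + (1/2)^n)" using le by (rule le_less_trans) simp
    then obtain a where acc: "acceptable (\<lambda>x. f x + a)" and "a < t + (1/2)^n"
      unfolding order_loss_def by (auto simp: Inf_less_iff)
    then show ?thesis by (intro acceptable_mono[OF acc]) simp
  qed
  then show "acceptable (\<lambda>x. f x + t)" by (rule acceptable_approx)
qed

lemma order_loss_le_zero_iff: "order_loss R f \<le> 0 \<longleftrightarrow> acceptable f"
  using order_loss_le_iff[of 0 f] by (simp add: zero_ereal_def)

lemma order_loss_eqI:
  assumes "\<And>t. t \<ge> 0 \<Longrightarrow> acceptable (\<lambda>x. f x + t) \<longleftrightarrow> y \<le> ereal t" and "y \<ge> 0"
  shows "order_loss R f = y"
proof (rule nonneg_ereal_eqI)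
  fix t :: real assume "t \<ge> 0"
  then show "order_loss R f \<le> ereal t \<longleftrightarrow> y \<le> ereal t"
    by (simp only: order_loss_le_iff assms(1))
qed (simp_all add: assms(2) order_loss_nonneg)

lemma order_loss_homogeneous:
  assumes "a \<ge> 0"
  shows "order_loss R (\<lambda>x. a * f x) = ereal a * order_loss R f"
proof (cases "a = 0")
  case True
  then show ?thesis
    using order_loss_le_zero_iff[of "\<lambda>_. 0"] order_loss_nonneg[of "\<lambda>_. 0"] refl by simp
next
  case False
  with assms have a: "a > 0" by simp
  show ?thesis
  proof (rule order_loss_eqI)
    fix t :: real assume t: "t \<ge> 0"
    have "(\<lambda>x. a * f x + t) = (\<lambda>x. a * (f x + t / a))" using a by (simp add: fun_eq_iff field_simps)
    then have "acceptable (\<lambda>x. a * f x + t) \<longleftrightarrow> acceptable (\<lambda>x. f x + t / a)"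
      using acceptable_scale_iff[OF a] by simp
    also have "\<dots> \<longleftrightarrow> order_loss R f \<le> ereal (t / a)" using order_loss_le_iff[of "t / a" f] t a by simp
    also have "\<dots> \<longleftrightarrow> ereal a * order_loss R f \<le> ereal t"
      using order_loss_nonneg[of f] a by (cases "order_loss R f") (auto simp: field_simps)
    finally show "acceptable (\<lambda>x. a * f x + t) \<longleftrightarrow> ereal a * order_loss R f \<le> ereal t" .
  qed (use order_loss_nonneg a in auto)
qed

lemma order_loss_subadditive: "order_loss R (\<lambda>x. f x + g x) \<le> order_loss R f + order_loss R g"
proof (cases "order_loss R f = \<infinity> \<or> order_loss R g = \<infinity>")
  case False
  then obtain r s where rs: "order_loss R f = ereal r" "order_loss R g = ereal s" "r \<ge> 0" "s \<ge> 0"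
    using order_loss_nonneg[of f] order_loss_nonneg[of g]
    by (cases "order_loss R f"; cases "order_loss R g") auto
  have "acceptable (\<lambda>x. f x + r)" using rs order_loss_le_iff[of r f] by simp
  moreover have "acceptable (\<lambda>x. g x + s)" using rs order_loss_le_iff[of s g] by simp
  ultimately have "acceptable (\<lambda>x. (f x + r) + (g x + s))" by (rule acceptable_add)
  then have "acceptable (\<lambda>x. (f x + g x) + (r + s))" by (simp add: algebra_simps)
  then show ?thesis using rs order_loss_le_iff[of "r + s" "\<lambda>x. f x + g x"] by simp
qed (use order_loss_nonneg[of f] order_loss_nonneg[of g] in auto)

lemma order_loss_antimono:
  assumes "\<And>x. f x \<le> g x"
  shows "order_loss R g \<le> order_loss R f"
proof (cases "order_loss R f")
  case (real r)
  with order_loss_nonneg[of f] have "r \<ge> 0" by simp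
  with real have "acceptable (\<lambda>x. f x + r)" using order_loss_le_iff[of r f] by simp
  then have "acceptable (\<lambda>x. g x + r)" by (rule acceptable_mono) (simp add: assms)
  with real \<open>r \<ge> 0\<close> show ?thesis using order_loss_le_iff[of r g] by simp
qed (use order_loss_nonneg[of f] in auto)

lemma order_loss_cash_subadditive:
  assumes "\<alpha> \<ge> 0"
  shows "order_loss R f - ereal \<alpha> \<le> order_loss R (\<lambda>x. f x + \<alpha>)"
proof (cases "order_loss R (\<lambda>x. f x + \<alpha>)")
  case (real r)
  with order_loss_nonneg[of "\<lambda>x. f x + \<alpha>"] have "r \<ge> 0" by simp
  with real have "acceptable (\<lambda>x. f x + (\<alpha> + r))"
    using order_loss_le_iff[of r "\<lambda>x. f x + \<alpha>"] by (simp add: add.assoc)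
  then have "order_loss R f \<le> ereal (\<alpha> + r)" using order_loss_le_iff[of "\<alpha> + r" f] \<open>r \<ge> 0\<close> assms by simp
  with real show ?thesis by (cases "order_loss R f") auto
qed (use order_loss_nonneg[of "\<lambda>x. f x + \<alpha>"] in auto)

lemma order_loss_min_zero: "order_loss R (\<lambda>x. min (f x) 0) = order_loss R f"
proof (rule order_loss_eqI)
  fix t :: real assume t: "t \<ge> 0"
  have "(\<lambda>x. min (min (f x) 0 + t) 0) = (\<lambda>x. min (f x + t) 0)" using t by (auto simp: fun_eq_iff)
  then have "acceptable (\<lambda>x. min (f x) 0 + t) \<longleftrightarrow> acceptable (\<lambda>x. f x + t)"
    using acceptable_min_zero_iff[of "\<lambda>x. min (f x) 0 + t"] acceptable_min_zero_iff[of "\<lambda>x. f x + t"]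
    by simp
  also have "\<dots> \<longleftrightarrow> order_loss R f \<le> ereal t" using order_loss_le_iff[OF t] by simp
  finally show "acceptable (\<lambda>x. min (f x) 0 + t) \<longleftrightarrow> order_loss R f \<le> ereal t" .
qed (rule order_loss_nonneg)

lemma coherent_order_loss: "coherent_cash_subadditive_loss_measure (order_loss R)"
  unfolding coherent_cash_subadditive_loss_measure_def
  using order_loss_homogeneous order_loss_subadditive order_loss_antimono
    order_loss_cash_subadditive order_loss_min_zero by metis

lemma order_loss_minus_one_pos: "order_loss R (\<lambda>_. -1) > 0"
  using order_loss_le_zero_iff[of "\<lambda>_. -1"] not_acceptable_minus_one by (simp add: not_le)

lemma induced_order_order_loss: "induced_order (order_loss R) = R"
proof (intro ext)
  show "induced_order (order_loss R) f g \<longleftrightarrow> R f g" for f g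
    using order_loss_le_zero_iff[of "\<lambda>x. f x - g x"] R_iff_acceptable_diff[of f g]
    by (simp add: induced_order_def)
qed

end

theorem theorem1:
  fixes R :: "('a \<Rightarrow> real) \<Rightarrow> ('a \<Rightarrow> real) \<Rightarrow> bool"
  shows "regular_stochastic_order R \<longleftrightarrow>
    (\<exists>\<rho> :: ('a \<Rightarrow> real) \<Rightarrow> ereal.
        coherent_cash_subadditive_loss_measure \<rho> \<and> \<rho> (\<lambda>_. -1) > 0 \<and>
        (\<forall>f g. R f g \<longleftrightarrow> \<rho> (\<lambda>x. f x - g x) \<le> 0))"
proof
  assume "regular_stochastic_order R"
  then interpret regular_order R by unfold_locales
  show "\<exists>\<rho>. coherent_cash_subadditive_loss_measure \<rho> \<and> \<rho> (\<lambda>_. -1) > 0 \<and>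
      (\<forall>f g. R f g \<longleftrightarrow> \<rho> (\<lambda>x. f x - g x) \<le> 0)"
    using coherent_order_loss order_loss_minus_one_pos induced_order_order_loss
    by (auto simp: induced_order_def fun_eq_iff)
next
  assume "\<exists>\<rho>. coherent_cash_subadditive_loss_measure \<rho> \<and> \<rho> (\<lambda>_. -1) > 0 \<and>
      (\<forall>f g. R f g \<longleftrightarrow> \<rho> (\<lambda>x. f x - g x) \<le> 0)"
  then obtain \<rho> where "coherent_loss \<rho>" and "\<rho> (\<lambda>_. -1) > 0" and "R = induced_order \<rho>"
    by (auto simp: coherent_loss_def induced_order_def fun_eq_iff)
  then show "regular_stochastic_order R"
    using coherent_loss.regular_stochastic_order_induced_order by blast
qed

end
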